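(* For all integers $n_0\geq 3$ and $\Delta\geq 3$, there is a $\Delta$-regular graph $G$ of order $n\geq n_0$ with $$Mo(G)\geq \frac{\Delta}{2}n^2-\left(20\Delta^3+12\Delta^2-24\Delta+48\right)n\log_{(\Delta-1)}(n).$$
   Context: All graphs are finite and simple. For a graph $G$ and an edge $uv$ of $G$, $n_G(u,v)$ denotes the number of vertices of $G$ whose distance in $G$ to $u$ is smaller than their distance to $v$. The Mostar index of $G$ is $Mo(G)=\sum_{uv\in E(G)}|n_G(u,v)-n_G(v,u)|$. *)

theory Defs
  imports Complex_Main "HOL-Library.Extended_Nat"
begin

definition simple_graph :: "'a set \<Rightarrow> ('a \<Rightarrow> 'a \<Rightarrow> bool) \<Rightarrow> bool" where
  "simple_graph V E \<longleftrightarrow> finite V \<and> (\<forall>u v. E u v \<longrightarrow> u \<in> V \<and> v \<in> V)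
     \<and> (\<forall>u v. E u v \<longrightarrow> E v u) \<and> (\<forall>u. \<not> E u u)"

definition degree :: "'a set \<Rightarrow> ('a \<Rightarrow> 'a \<Rightarrow> bool) \<Rightarrow> 'a \<Rightarrow> nat" where
  "degree V E v = card {w \<in> V. E v w}"

definition regular :: "'a set \<Rightarrow> ('a \<Rightarrow> 'a \<Rightarrow> bool) \<Rightarrow> nat \<Rightarrow> bool" where
  "regular V E d \<longleftrightarrow> (\<forall>v\<in>V. degree V E v = d)"

definition walk :: "'a set \<Rightarrow> ('a \<Rightarrow> 'a \<Rightarrow> bool) \<Rightarrow> 'a list \<Rightarrow> bool" where
  "walk V E xs \<longleftrightarrow> xs \<noteq> [] \<and> set xs \<subseteq> V \<and> (\<forall>i < length xs - 1. E (xs ! i) (xs ! Suc i))"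

text \<open>Graph distance; \<infinity> if no walk exists.\<close>
definition dist :: "'a set \<Rightarrow> ('a \<Rightarrow> 'a \<Rightarrow> bool) \<Rightarrow> 'a \<Rightarrow> 'a \<Rightarrow> enat" where
  "dist V E u v = (INF xs \<in> {xs. walk V E xs \<and> hd xs = u \<and> last xs = v}. enat (length xs - 1))"

definition n_closer :: "'a set \<Rightarrow> ('a \<Rightarrow> 'a \<Rightarrow> bool) \<Rightarrow> 'a \<Rightarrow> 'a \<Rightarrow> nat" where
  "n_closer V E u v = card {w \<in> V. dist V E w u < dist V E w v}"

text \<open>Mostar index: sum over edges uv of |n(u,v) - n(v,u)|. Each unordered edge
appears twice as an ordered pair with the same (symmetric) summand, so we sum over
ordered pairs and divide by 2 (exact).\<close>
definition mostar :: "'a set \<Rightarrow> ('a \<Rightarrow> 'a \<Rightarrow> bool) \<Rightarrow> nat" where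
  "mostar V E = (\<Sum>(u, v) \<in> {(u, v). E u v}.
      nat \<bar>int (n_closer V E u v) - int (n_closer V E v u)\<bar>) div 2"

end

theory Submission
  imports Defs "HOL-Library.Countable" "HOL-Library.Sublist"
begin

text \<open>
  The graph is a complete (Delta-1)-ary tree of height h whose nodes carry gadgets of bounded
  size; a gadget is joined to its parent only through its two vertices Up0 and Up1.
  Let uv be an edge with both endpoints in the subtree of a node p. Every vertex outside the
  subtree of the parent of p is strictly closer to (p, Up0) than to (p, Up1), so its shortest
  paths to u and v enter through (p, Up0); the graph being bipartite, all these vertices are
  closer to the same endpoint, and |n(u,v) - n(v,u)| is at least n minus twice the size of the
  parent's subtree. Summing over the Delta n / 2 edges, the loss double counts pairs
  (vertex, ancestor), of which there are O(Delta^2 h n), and h <= log_(Delta-1) n.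
\<close>

section \<open>Walks and distances\<close>

lemma walk_singleton_iff [simp]: "walk V E [u] \<longleftrightarrow> u \<in> V"
  by (simp add: walk_def)

lemma walk_Cons_Cons_iff [simp]:
  "walk V E (u # v # xs) \<longleftrightarrow> u \<in> V \<and> E u v \<and> walk V E (v # xs)"
proof
  assume h: "walk V E (u # v # xs)"
  then have "\<forall>i < length xs. E ((v # xs) ! i) ((v # xs) ! Suc i)"
    unfolding walk_def by (metis Suc_less_eq length_Cons diff_Suc_1 nth_Cons_Suc)
  moreover have "u \<in> V" "E u v" "set (v # xs) \<subseteq> V"
    using h unfolding walk_def by (force simp: nth_Cons)+
  ultimately show "u \<in> V \<and> E u v \<and> walk V E (v # xs)"
    by (simp add: walk_def)
next
  assume "u \<in> V \<and> E u v \<and> walk V E (v # xs)"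
  then show "walk V E (u # v # xs)"
    unfolding walk_def by (auto simp: nth_Cons split: nat.split)
qed

lemma walk_not_Nil: "walk V E xs \<Longrightarrow> xs \<noteq> []"
  by (simp add: walk_def)

lemma walk_append:
  "walk V E xs \<Longrightarrow> walk V E ys \<Longrightarrow> last xs = hd ys \<Longrightarrow> walk V E (xs @ tl ys)"
proof (induction xs rule: induct_list012)
  case (2 x)
  then show ?case by (cases ys) auto
next
  case (3 x y zs)
  then have "walk V E ((y # zs) @ tl ys)" by auto
  then show ?case using 3 by auto
qed (simp add: walk_def)

lemma dist_le_walk_length:
  "walk V E xs \<Longrightarrow> hd xs = u \<Longrightarrow> last xs = v \<Longrightarrow> dist V E u v \<le> enat (length xs - 1)"
  unfolding dist_def by (rule INF_lower) auto

lemma dist_greatest: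
  "(\<And>xs. walk V E xs \<Longrightarrow> hd xs = u \<Longrightarrow> last xs = v \<Longrightarrow> k \<le> enat (length xs - 1))
   \<Longrightarrow> k \<le> dist V E u v"
  unfolding dist_def by (rule INF_greatest) auto

lemma dist_attained:
  assumes "dist V E u v \<noteq> \<infinity>"
  obtains xs where "walk V E xs" "hd xs = u" "last xs = v" "dist V E u v = enat (length xs - 1)"
proof -
  let ?A = "(\<lambda>xs. enat (length xs - 1)) ` {xs. walk V E xs \<and> hd xs = u \<and> last xs = v}"
  have "?A \<noteq> {}"
  proof
    assume "?A = {}"
    then have "Inf ?A = \<infinity>"
      by (simp only: Inf_empty top_enat_def)
    with assms show False
      unfolding dist_def by simp
  qed
  then have "Inf ?A \<in> ?A"
    by (auto simp: Inf_enat_def intro: LeastI)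
  then show ?thesis
    using that by (auto simp: dist_def)
qed

lemma dist_self: "u \<in> V \<Longrightarrow> dist V E u u = 0"
  using dist_le_walk_length[of V E "[u]" u u] by (simp flip: zero_enat_def)

lemma dist_le_1_if_edge: "E u v \<Longrightarrow> u \<in> V \<Longrightarrow> v \<in> V \<Longrightarrow> dist V E u v \<le> 1"
  using dist_le_walk_length[of V E "[u, v]" u v] by (simp add: one_enat_def)

lemma dist_triangle: "dist V E u w \<le> dist V E u v + dist V E v w"
proof (cases "dist V E u v = \<infinity> \<or> dist V E v w = \<infinity>")
  case False
  then obtain xs ys where
    xs: "walk V E xs" "hd xs = u" "last xs = v" "dist V E u v = enat (length xs - 1)" and
    ys: "walk V E ys" "hd ys = v" "last ys = w" "dist V E v w = enat (length ys - 1)"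
    using dist_attained by metis
  obtain y ys' where ys': "ys = y # ys'"
    using walk_not_Nil[OF ys(1)] by (cases ys) auto
  have "xs \<noteq> []"
    using walk_not_Nil[OF xs(1)] .
  then have "hd (xs @ ys') = u" "last (xs @ ys') = w"
      "length (xs @ ys') - 1 = (length xs - 1) + (length ys - 1)"
    using xs ys ys' by (auto simp: last_append Suc_leI)
  moreover have "walk V E (xs @ ys')"
    using walk_append[OF xs(1) ys(1)] xs(3) ys(2) ys' by simp
  ultimately have "dist V E u w \<le> enat ((length xs - 1) + (length ys - 1))"
    by (metis dist_le_walk_length)
  then show ?thesis
    using xs(4) ys(4) by simp
qed auto

lemma walk_colour_parity:
  fixes col :: "'a \<Rightarrow> bool"
  assumes colour: "\<And>u v. E u v \<Longrightarrow> col u \<noteq> col v"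
  shows "walk V E xs \<Longrightarrow> (col (hd xs) = col (last xs)) \<longleftrightarrow> even (length xs - 1)"
proof (induction xs rule: induct_list012)
  case (3 x y zs)
  have IH: "col y = col (last (y # zs)) \<longleftrightarrow> even (length zs)"
    using 3 by simp
  have "col x \<longleftrightarrow> \<not> col y"
    using colour "3.prems" by auto
  moreover have "last (x # y # zs) = last (y # zs)" "length (x # y # zs) - 1 = Suc (length zs)"
    by simp_all
  ultimately show ?case
    using IH by (simp only: list.sel(1) even_Suc) blast
qed (simp_all add: walk_def)

lemma dist_colour_parity:
  fixes col :: "'a \<Rightarrow> bool"
  assumes "\<And>u v. E u v \<Longrightarrow> col u \<noteq> col v" and "dist V E u v = enat k"
  shows "col u = col v \<longleftrightarrow> even k"
proof -
  obtain xs where xs: "walk V E xs" "hd xs = u" "last xs = v" "dist V E u v = enat (length xs - 1)"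
    using dist_attained[of V E u v] assms(2) by auto
  then have "k = length xs - 1"
    using assms(2) by simp
  then show ?thesis
    using walk_colour_parity[OF assms(1) xs(1)] xs(2,3) by simp
qed

lemma edge_if_dist_le_1:
  assumes "dist V E u v \<le> 1" "u \<noteq> v"
  shows "E u v"
proof -
  have "dist V E u v \<noteq> \<infinity>"
    using assms(1) by (cases "dist V E u v") (auto simp: one_enat_def)
  then obtain xs where xs: "walk V E xs" "hd xs = u" "last xs = v" "dist V E u v = enat (length xs - 1)"
    by (rule dist_attained)
  then have "length xs \<le> 2" "xs \<noteq> []"
    using assms(1) walk_not_Nil by (auto simp: one_enat_def)
  then consider a where "xs = [a]" | a b where "xs = [a, b]"
    by (metis One_nat_def Suc_1 le_Suc_eq le_zero_eq length_0_conv length_Suc_conv)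
  then show ?thesis
    by cases (use xs assms(2) in auto)
qed

lemma common_neighbour_if_dist_eq_2:
  assumes "dist V E u v = 2"
  obtains w where "E u w" "E w v"
proof -
  have "dist V E u v \<noteq> \<infinity>"
    using assms by simp
  then obtain xs where xs: "walk V E xs" "hd xs = u" "last xs = v" "dist V E u v = enat (length xs - 1)"
    by (rule dist_attained)
  then have "length xs = 3"
    using assms walk_not_Nil[OF xs(1)] by (cases xs) (auto simp: numeral_eq_enat)
  then obtain a b c where "xs = [a, b, c]"
    by (cases xs; cases "tl xs"; cases "tl (tl xs)") auto
  then show ?thesis
    using xs that by auto
qed

lemma dist_through_boundary:
  assumes sym: "\<And>x y. E x y \<Longrightarrow> E y x"
    and boundary: "\<And>x y. E x y \<Longrightarrow> x \<in> R \<Longrightarrow> y \<notin> R \<Longrightarrow> x = a \<or> x = b"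
    and "w \<notin> R" "z \<in> R"
  shows "min (dist V E w a + dist V E a z) (dist V E w b + dist V E b z) \<le> dist V E w z"
proof -
  have enter: "\<exists>t\<in>{a, b}. dist V E x t + dist V E t (last (x # ys)) \<le> enat (length ys)"
    if "walk V E (x # ys)" "x \<notin> R" "last (x # ys) \<in> R" for x ys
    using that
  proof (induction ys arbitrary: x)
    case (Cons y ys)
    then have xy: "E x y" "x \<in> V" "y \<in> V" and walk: "walk V E (y # ys)"
      by (auto simp: walk_def)
    have "dist V E x y \<le> 1"
      using dist_le_1_if_edge[of E x y V] xy by blast
    show ?case
    proof (cases "y \<in> R")
      case True
      then have "y \<in> {a, b}"
        using boundary[OF sym[OF xy(1)]] Cons.prems(2) by auto
      moreover have "dist V E y (last (y # ys)) \<le> enat (length ys)"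
        using dist_le_walk_length[OF walk] by simp
      ultimately show ?thesis
        using \<open>dist V E x y \<le> 1\<close> add_mono by (fastforce simp: one_enat_def)
    next
      case False
      then obtain t where t: "t \<in> {a, b}" "dist V E y t + dist V E t (last (y # ys)) \<le> enat (length ys)"
        using Cons.IH[OF walk] Cons.prems(3) by auto
      have "dist V E x t + dist V E t (last (y # ys))
          \<le> dist V E x y + (dist V E y t + dist V E t (last (y # ys)))"
        using dist_triangle[of V E x t y] by (metis add.assoc add_right_mono)
      also have "\<dots> \<le> 1 + enat (length ys)"
        using \<open>dist V E x y \<le> 1\<close> t(2) by (rule add_mono)
      finally show ?thesis
        using t(1) by (auto simp: one_enat_def)
    qed
  qed simp
  show ?thesis
  proof (rule dist_greatest)
    fix xs
    assume xs: "walk V E xs" "hd xs = w" "last xs = z"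
    then obtain ys where ys: "xs = w # ys"
      using walk_not_Nil by (cases xs) auto
    then obtain t where "t \<in> {a, b}" "dist V E w t + dist V E t z \<le> enat (length ys)"
      using enter[of w ys] xs assms(3,4) by auto
    then show "min (dist V E w a + dist V E a z) (dist V E w b + dist V E b z) \<le> enat (length xs - 1)"
      using ys by (auto simp: min_le_iff_disj)
  qed
qed

lemma dist_finite_if_rtranclp:
  assumes "E\<^sup>*\<^sup>* u v" "u \<in> V" and closed: "\<And>x y. E x y \<Longrightarrow> x \<in> V \<and> y \<in> V"
  shows "dist V E u v \<noteq> \<infinity>"
  using assms(1)
proof (induction rule: rtranclp_induct)
  case base
  then show ?case
    using dist_self[OF assms(2)] by simp
next
  case (step y z)
  have "dist V E y z \<le> 1"
    using dist_le_1_if_edge[of E y z V] step(2) closed[OF step(2)] by auto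
  then show ?case
    using dist_triangle[of V E u z y] step(3)
    by (cases "dist V E u y"; cases "dist V E y z"; cases "dist V E u z") (auto simp: one_enat_def)
qed

lemma dist_ge_3_if_odd:
  fixes col :: "'a \<Rightarrow> bool"
  assumes "\<And>x y. E x y \<Longrightarrow> col x \<noteq> col y"
    and "dist V E u v \<noteq> \<infinity>" "col u \<noteq> col v" "\<not> E u v"
  shows "3 \<le> dist V E u v"
proof -
  obtain k where k: "dist V E u v = enat k"
    using assms(2) by auto
  then have "odd k"
    using dist_colour_parity[where col = col, OF assms(1) k] assms(3) by simp
  moreover have "k \<noteq> 1"
    using edge_if_dist_le_1[of V E u v] k assms(3,4) by (auto simp: one_enat_def)
  ultimately have "3 \<le> k"
    by presburger
  then show ?thesis
    using k by (simp add: numeral_eq_enat)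
qed

lemma dist_ge_4_if_even:
  fixes col :: "'a \<Rightarrow> bool"
  assumes "\<And>x y. E x y \<Longrightarrow> col x \<noteq> col y"
    and "dist V E u v \<noteq> \<infinity>" "col u = col v" "u \<noteq> v" "\<And>w. \<not> (E u w \<and> E w v)"
  shows "4 \<le> dist V E u v"
proof -
  obtain k where k: "dist V E u v = enat k"
    using assms(2) by auto
  then have "even k"
    using dist_colour_parity[where col = col, OF assms(1) k] assms(3) by simp
  moreover have "k \<noteq> 0"
  proof
    assume "k = 0"
    then have "E u v"
      using edge_if_dist_le_1[of V E u v] k assms(4) by (simp flip: zero_enat_def)
    then show False
      using assms(1,3) by blast
  qed
  moreover have "k \<noteq> 2"
    using common_neighbour_if_dist_eq_2[of V E u v] k assms(5) by (auto simp: numeral_eq_enat)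
  ultimately have "4 \<le> k"
    by presburger
  then show ?thesis
    using k by (simp add: numeral_eq_enat)
qed

text \<open>
  Shortest paths from outside Q reach a1 through b0 or b1, and the four distance bounds make
  that strictly longer than reaching a0; hence shortest paths into R may enter through a0.
\<close>

lemma dist_via_near_port:
  assumes symmetric: "\<And>x y. E x y \<Longrightarrow> E y x"
    and connected: "\<And>x y. x \<in> V \<Longrightarrow> y \<in> V \<Longrightarrow> dist V E x y \<noteq> \<infinity>"
    and cut_Q: "\<And>x y. E x y \<Longrightarrow> x \<in> Q \<Longrightarrow> y \<notin> Q \<Longrightarrow> x = b0 \<or> x = b1"
    and cut_R: "\<And>x y. E x y \<Longrightarrow> x \<in> R \<Longrightarrow> y \<notin> R \<Longrightarrow> x = a0 \<or> x = a1"
    and sets: "R \<subseteq> Q" "Q \<subseteq> V" "a0 \<in> V" "a1 \<in> R" "b0 \<in> V" "b1 \<in> V"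
    and "E a0 a1"
    and ports: "dist V E b0 a0 \<le> 2" "dist V E b1 a0 \<le> 3" "3 \<le> dist V E b0 a1" "4 \<le> dist V E b1 a1"
    and w: "w \<in> V - Q" and z: "z \<in> R"
  shows "dist V E w z = dist V E w a0 + dist V E a0 z"
proof -
  define \<delta> where "\<delta> x y = the_enat (dist V E x y)" for x y
  have \<delta>: "dist V E x y = enat (\<delta> x y)" if "x \<in> V" "y \<in> V" for x y
    using connected[OF that] by (auto simp: \<delta>_def)
  have V: "w \<in> V" "z \<in> V" "a0 \<in> V" "a1 \<in> V" "b0 \<in> V" "b1 \<in> V" "w \<notin> R" "a1 \<in> Q"
    using sets w z by auto
  have "min (dist V E w b0 + dist V E b0 a1) (dist V E w b1 + dist V E b1 a1) \<le> dist V E w a1"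
    by (rule dist_through_boundary[where R = Q]) (erule symmetric, (erule cut_Q; assumption), (use w V in blast)+)
  then have Q: "min (\<delta> w b0 + \<delta> b0 a1) (\<delta> w b1 + \<delta> b1 a1) \<le> \<delta> w a1"
    using V by (simp add: \<delta>)
  have "min (dist V E w a0 + dist V E a0 z) (dist V E w a1 + dist V E a1 z) \<le> dist V E w z"
    by (rule dist_through_boundary[where R = R]) (erule symmetric, (erule cut_R; assumption), (use V z in blast)+)
  then have R: "min (\<delta> w a0 + \<delta> a0 z) (\<delta> w a1 + \<delta> a1 z) \<le> \<delta> w z"
    using V by (simp add: \<delta>)
  have "dist V E a0 a1 \<le> 1"
    using dist_le_1_if_edge[of E a0 a1 V] \<open>E a0 a1\<close> V by blast
  then have near: "\<delta> a0 a1 \<le> 1" "\<delta> b0 a0 \<le> 2" "\<delta> b1 a0 \<le> 3" "3 \<le> \<delta> b0 a1" "4 \<le> \<delta> b1 a1"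
    using V ports by (simp_all add: \<delta> numeral_eq_enat one_enat_def)
  have triangle: "\<delta> x z \<le> \<delta> x y + \<delta> y z" if "x \<in> V" "y \<in> V" "z \<in> V" for x y z
    using dist_triangle[of V E x z y] that by (simp add: \<delta>)
  have "\<delta> w a0 \<le> \<delta> w b0 + \<delta> b0 a0" "\<delta> w a0 \<le> \<delta> w b1 + \<delta> b1 a0"
      "\<delta> a0 z \<le> \<delta> a0 a1 + \<delta> a1 z" "\<delta> w z \<le> \<delta> w a0 + \<delta> a0 z"
    using triangle V by blast+
  then have "\<delta> w z = \<delta> w a0 + \<delta> a0 z"
    using Q R near by linarith
  then show ?thesis
    using V by (simp add: \<delta>)
qed

section \<open>Lower bounds for the Mostar index\<close>

lemma n_closer_diff_ge_if_closer_outside: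
  assumes "finite V" "Q \<subseteq> V" and closer: "\<And>w. w \<in> V - Q \<Longrightarrow> dist V E w u < dist V E w v"
  shows "real (card V) - 2 * real (card Q) \<le> real (n_closer V E u v) - real (n_closer V E v u)"
proof -
  have "card (V - Q) \<le> n_closer V E u v"
    unfolding n_closer_def using assms by (intro card_mono) auto
  moreover have "n_closer V E v u \<le> card Q"
    unfolding n_closer_def using assms
    by (intro card_mono) (auto intro: finite_subset dest: less_asym)
  moreover have "card (V - Q) = card V - card Q" "card Q \<le> card V"
    using assms by (auto simp: card_Diff_subset finite_subset card_mono)
  ultimately show ?thesis
    by linarith
qed

lemma abs_n_closer_diff_ge_if_bipartite:
  fixes col :: "'a \<Rightarrow> bool"
  assumes "finite V" "Q \<subseteq> V"
    and colour: "\<And>x y. E x y \<Longrightarrow> col x \<noteq> col y" and "E u v"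
    and dist_a: "dist V E a u \<noteq> \<infinity>" "dist V E a v \<noteq> \<infinity>"
    and via_a: "\<And>w z. w \<in> V - Q \<Longrightarrow> z \<in> {u, v} \<Longrightarrow> dist V E w z = dist V E w a + dist V E a z"
    and dist_to_a: "\<And>w. w \<in> V - Q \<Longrightarrow> dist V E w a \<noteq> \<infinity>"
  shows "real (card V) - 2 * real (card Q)
    \<le> \<bar>real (n_closer V E u v) - real (n_closer V E v u)\<bar>"
proof -
  obtain i j where ij: "dist V E a u = enat i" "dist V E a v = enat j"
    using dist_a by auto
  have "col u \<noteq> col v"
    using colour \<open>E u v\<close> by blast
  then have "i \<noteq> j"
    using dist_colour_parity[where col = col, OF colour] ij by metis
  then consider "i < j" | "j < i"
    by linarith
  then show ?thesis
  proof cases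
    case 1
    then have "dist V E w u < dist V E w v" if "w \<in> V - Q" for w
      using via_a[OF that] ij dist_to_a[OF that] by (cases "dist V E w a") auto
    then show ?thesis
      using n_closer_diff_ge_if_closer_outside[OF assms(1,2)] by fastforce
  next
    case 2
    then have "dist V E w v < dist V E w u" if "w \<in> V - Q" for w
      using via_a[OF that] ij dist_to_a[OF that] by (cases "dist V E w a") auto
    then show ?thesis
      using n_closer_diff_ge_if_closer_outside[OF assms(1,2)] by fastforce
  qed
qed

text \<open>The 1/2 absorbs the truncating division in the definition of mostar.\<close>

lemma mostar_ge_if_edge_bound:
  fixes \<kappa> :: "'a \<Rightarrow> real"
  assumes G: "simple_graph V E" and reg: "regular V E d"
    and edge: "\<And>u v. E u v \<Longrightarrow>
      real (card V) - (\<kappa> u + \<kappa> v) \<le> \<bar>real (n_closer V E u v) - real (n_closer V E v u)\<bar>"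
  shows "real d * real (card V)^2 / 2 - real d * (\<Sum>u\<in>V. \<kappa> u) - 1/2 \<le> real (mostar V E)"
proof -
  let ?n = "real (card V)" and ?A = "{(u, v). E u v}"
  let ?S = "\<Sum>(u, v)\<in>?A. nat \<bar>int (n_closer V E u v) - int (n_closer V E v u)\<bar>"
  have finite: "finite V" and sym: "\<And>u v. E u v \<Longrightarrow> E v u"
    and A: "?A = Sigma V (\<lambda>u. {v \<in> V. E u v})"
    using G unfolding simple_graph_def by auto
  have deg: "card {v \<in> V. E u v} = d" if "u \<in> V" for u
    using reg that unfolding regular_def degree_def by blast
  have sum_tail: "(\<Sum>(u, v)\<in>?A. \<kappa> u) = real d * (\<Sum>u\<in>V. \<kappa> u)"
    unfolding A using finite deg by (simp add: sum.Sigma[symmetric] sum_distrib_left)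
  have "?A = prod.swap ` ?A"
    using sym by fastforce
  then have "(\<Sum>(u, v)\<in>?A. \<kappa> u) = (\<Sum>(u, v)\<in>prod.swap ` ?A. \<kappa> u)"
    by simp
  also have "\<dots> = (\<Sum>(u, v)\<in>?A. \<kappa> v)"
    by (subst sum.reindex) (auto simp: case_prod_beta)
  finally have sum_head: "(\<Sum>(u, v)\<in>?A. \<kappa> v) = (\<Sum>(u, v)\<in>?A. \<kappa> u)"
    by simp
  have "real (card ?A) = real d * ?n"
    unfolding A using finite deg by (simp add: card_SigmaI)
  then have "real d * ?n^2 - 2 * real d * (\<Sum>u\<in>V. \<kappa> u)
      = (\<Sum>(u, v)\<in>?A. ?n - (\<kappa> u + \<kappa> v))"
    using sum_tail sum_head
    by (simp add: sum_subtractf sum.distrib case_prod_beta power2_eq_square algebra_simps)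
  also have "\<dots> \<le> (\<Sum>(u, v)\<in>?A. \<bar>real (n_closer V E u v) - real (n_closer V E v u)\<bar>)"
    using edge by (intro sum_mono) auto
  also have "\<dots> = real ?S"
    by (simp add: case_prod_beta)
  finally have "real d * ?n^2 - 2 * real d * (\<Sum>u\<in>V. \<kappa> u) \<le> real ?S" .
  moreover have "?S \<le> 2 * (?S div 2) + 1"
    by linarith
  then have "real ?S \<le> 2 * real (mostar V E) + 1"
    unfolding mostar_def by linarith
  ultimately show ?thesis
    by simp
qed

section \<open>Relabelling vertices\<close>

definition image_edges :: "('a \<Rightarrow> 'b) \<Rightarrow> ('a \<Rightarrow> 'a \<Rightarrow> bool) \<Rightarrow> 'b \<Rightarrow> 'b \<Rightarrow> bool" where
  "image_edges f E x y \<longleftrightarrow> (\<exists>u v. x = f u \<and> y = f v \<and> E u v)"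

context
  fixes f :: "'a \<Rightarrow> 'b" and V :: "'a set" and E :: "'a \<Rightarrow> 'a \<Rightarrow> bool"
  assumes inj: "inj f"
begin

lemma image_edges_iff [simp]: "image_edges f E (f u) (f v) \<longleftrightarrow> E u v"
  unfolding image_edges_def using inj by (auto dest: injD)

lemma walk_image_iff: "walk (f ` V) (image_edges f E) (map f xs) \<longleftrightarrow> walk V E xs"
proof -
  have "set (map f xs) \<subseteq> f ` V \<longleftrightarrow> set xs \<subseteq> V"
    using inj by (auto dest: injD)
  then show ?thesis
    unfolding walk_def by auto
qed

lemma dist_image: "dist (f ` V) (image_edges f E) (f u) (f v) = dist V E u v"
proof (rule antisym)
  show "dist (f ` V) (image_edges f E) (f u) (f v) \<le> dist V E u v"
  proof (rule dist_greatest)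
    fix xs
    assume xs: "walk V E xs" "hd xs = u" "last xs = v"
    have "xs \<noteq> []"
      using xs(1) by (rule walk_not_Nil)
    then show "dist (f ` V) (image_edges f E) (f u) (f v) \<le> enat (length xs - 1)"
      using dist_le_walk_length[of "f ` V" "image_edges f E" "map f xs"] xs
      by (simp add: walk_image_iff hd_map last_map)
  qed
next
  show "dist V E u v \<le> dist (f ` V) (image_edges f E) (f u) (f v)"
  proof (rule dist_greatest)
    fix ys
    assume ys: "walk (f ` V) (image_edges f E) ys" "hd ys = f u" "last ys = f v"
    then have "set ys \<subseteq> f ` V"
      by (simp add: walk_def)
    then have "ys = map f (map (inv f) ys)"
      by (induction ys) (auto simp: f_inv_into_f)
    then obtain xs where xs: "ys = map f xs"
      by blast
    then have "walk V E xs" "xs \<noteq> []"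
      using ys(1) walk_image_iff walk_not_Nil by auto
    moreover have "hd xs = u" "last xs = v"
      using ys xs \<open>xs \<noteq> []\<close> inj by (auto simp: hd_map last_map dest: injD)
    ultimately show "dist V E u v \<le> enat (length ys - 1)"
      using dist_le_walk_length xs by fastforce
  qed
qed

lemma n_closer_image: "n_closer (f ` V) (image_edges f E) (f u) (f v) = n_closer V E u v"
proof -
  have "{x \<in> f ` V. dist (f ` V) (image_edges f E) x (f u) < dist (f ` V) (image_edges f E) x (f v)}
      = f ` {w \<in> V. dist V E w u < dist V E w v}"
    by (auto simp: dist_image)
  then show ?thesis
    unfolding n_closer_def by (simp add: card_image inj_on_subset[OF inj])
qed

lemma mostar_image: "mostar (f ` V) (image_edges f E) = mostar V E"
proof -
  let ?g = "\<lambda>(u, v). (f u, f v)"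
  have arcs: "{(x, y). image_edges f E x y} = ?g ` {(u, v). E u v}"
    unfolding image_edges_def by auto
  have "inj_on ?g {(u, v). E u v}"
    using inj unfolding inj_on_def by (auto dest: injD)
  then have "(\<Sum>(x, y)\<in>?g ` {(u, v). E u v}.
        nat \<bar>int (n_closer (f ` V) (image_edges f E) x y) - int (n_closer (f ` V) (image_edges f E) y x)\<bar>)
      = (\<Sum>(u, v)\<in>{(u, v). E u v}. nat \<bar>int (n_closer V E u v) - int (n_closer V E v u)\<bar>)"
    by (subst sum.reindex) (simp_all add: case_prod_beta n_closer_image)
  then show ?thesis
    unfolding mostar_def arcs by simp
qed

lemma simple_graph_image: "simple_graph V E \<Longrightarrow> simple_graph (f ` V) (image_edges f E)"
  unfolding simple_graph_def image_edges_def using inj by (auto dest: injD) blast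

lemma regular_image:
  assumes "regular V E k"
  shows "regular (f ` V) (image_edges f E) k"
  unfolding regular_def degree_def
proof
  fix x
  assume "x \<in> f ` V"
  then obtain v where v: "v \<in> V" "x = f v"
    by auto
  have "{y \<in> f ` V. image_edges f E (f v) y} = f ` {w \<in> V. E v w}"
    by auto
  then have "card {y \<in> f ` V. image_edges f E x y} = card {w \<in> V. E v w}"
    using v by (simp add: card_image inj_on_subset[OF inj])
  then show "card {y \<in> f ` V. image_edges f E x y} = k"
    using assms v unfolding regular_def degree_def by simp
qed

lemma card_image_vertices: "card (f ` V) = card V"
  by (simp add: card_image inj_on_subset[OF inj])

end


section \<open>The gadget tree\<close>

datatype label = Up0 | Up1 | Down0 | Down1 | CoreX nat | CoreY nat | RootX nat | RootY nat

instance label :: countable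
  by countable_datatype

text \<open>
  The vertex (p, l) has label l in the gadget at node p of the complete (d-1)-ary tree of
  height h, p being the path from the root. Up0 and Up1 are joined to Down0 and Down1 of the
  parent; CoreX and CoreY span K_{d,d} minus d-2 edges of a perfect matching, and the root also
  carries RootX and RootY, spanning K_{d,d} minus one edge, in place of its missing parent.
  In a gadget with children (inner), Down0 and Down1 take the place of the edge Up0-CoreY 0.
\<close>

locale gadget_tree =
  fixes d h :: nat
  assumes three_le_d: "3 \<le> d"
begin

fun label_ok :: "nat list \<Rightarrow> label \<Rightarrow> bool" where
  "label_ok p Down0 \<longleftrightarrow> length p < h"
| "label_ok p Down1 \<longleftrightarrow> length p < h"
| "label_ok p (CoreX i) \<longleftrightarrow> i < d"
| "label_ok p (CoreY j) \<longleftrightarrow> j < d"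
| "label_ok p (RootX i) \<longleftrightarrow> p = [] \<and> i < d"
| "label_ok p (RootY j) \<longleftrightarrow> p = [] \<and> j < d"
| "label_ok p _ \<longleftrightarrow> True"

fun gadget_arc :: "bool \<Rightarrow> label \<Rightarrow> label \<Rightarrow> bool" where
  "gadget_arc inner Up0 Up1 \<longleftrightarrow> True"
| "gadget_arc inner Up0 Down0 \<longleftrightarrow> True"
| "gadget_arc inner Up0 (CoreY j) \<longleftrightarrow> j < d - 2 \<and> (inner \<longrightarrow> j \<noteq> 0)"
| "gadget_arc inner Up0 (RootY j) \<longleftrightarrow> j = 0"
| "gadget_arc inner Up1 (CoreX i) \<longleftrightarrow> i < d - 2"
| "gadget_arc inner Up1 (RootX i) \<longleftrightarrow> i = 0"
| "gadget_arc inner Down1 (CoreY j) \<longleftrightarrow> j = 0"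
| "gadget_arc inner (CoreX i) (CoreY j) \<longleftrightarrow> i \<noteq> j \<or> d - 2 \<le> i"
| "gadget_arc inner (RootX i) (RootY j) \<longleftrightarrow> i \<noteq> 0 \<or> j \<noteq> 0"
| "gadget_arc inner _ _ \<longleftrightarrow> False"

fun arc :: "nat list \<times> label \<Rightarrow> nat list \<times> label \<Rightarrow> bool" where
  "arc (p, a) (q, b) \<longleftrightarrow>
     q = p \<and> gadget_arc (length p < h) a b
   \<or> (\<exists>c. q = p @ [c] \<and> (a = Down0 \<and> b = Up0 \<or> a = Down1 \<and> b = Up1))"

definition verts :: "(nat list \<times> label) set" where
  "verts = {(p, l). set p \<subseteq> {..<d - 1} \<and> length p \<le> h \<and> label_ok p l}"

definition edge :: "nat list \<times> label \<Rightarrow> nat list \<times> label \<Rightarrow> bool" where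
  "edge u v \<longleftrightarrow> u \<in> verts \<and> v \<in> verts \<and> (arc u v \<or> arc v u)"

fun side :: "label \<Rightarrow> bool" where
  "side Up0 = True"
| "side Down1 = True"
| "side (CoreX _) = True"
| "side (RootX _) = True"
| "side _ = False"

lemma edge_sym: "edge u v \<Longrightarrow> edge v u"
  unfolding edge_def by auto

lemma edge_in_verts: "edge u v \<Longrightarrow> u \<in> verts \<and> v \<in> verts"
  unfolding edge_def by auto

lemma edge_side: "edge u v \<Longrightarrow> side (snd u) \<noteq> side (snd v)"
proof -
  have "side a \<noteq> side b" if "gadget_arc inner a b" for inner a b
    using that by (cases "(inner, a, b)" rule: gadget_arc.cases) auto
  then have "arc u v \<Longrightarrow> side (snd u) \<noteq> side (snd v)" for u v
    by (cases u; cases v) auto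
  then show "edge u v \<Longrightarrow> side (snd u) \<noteq> side (snd v)"
    unfolding edge_def by metis
qed

definition labels :: "label set" where
  "labels = {Up0, Up1, Down0, Down1}
    \<union> CoreX ` {..<d} \<union> CoreY ` {..<d} \<union> RootX ` {..<d} \<union> RootY ` {..<d}"

lemma label_ok_in_labels: "label_ok p l \<Longrightarrow> l \<in> labels"
  by (cases l) (auto simp: labels_def)

lemma card_labels_le: "card labels \<le> 4 + 4 * d"
proof -
  have "card labels \<le> card {Up0, Up1, Down0, Down1} + card (CoreX ` {..<d}) + card (CoreY ` {..<d})
      + card (RootX ` {..<d}) + card (RootY ` {..<d})"
    unfolding labels_def by (intro card_Un_le[THEN order_trans] add_mono) auto
  also have "\<dots> = 4 + 4 * d"
    by (auto simp: card_image inj_on_def card_insert_if image_iff)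
  finally show ?thesis .
qed

lemma finite_verts: "finite verts"
proof (rule finite_subset)
  show "verts \<subseteq> {p. set p \<subseteq> {..<d - 1} \<and> length p \<le> h} \<times> labels"
    using label_ok_in_labels by (auto simp: verts_def)
  show "finite ({p. set p \<subseteq> {..<d - 1} \<and> length p \<le> h} \<times> labels)"
    by (intro finite_cartesian_product finite_lists_length_le) (auto simp: labels_def)
qed

lemma simple_graph_verts: "simple_graph verts edge"
proof -
  have "\<not> gadget_arc inner l l" for inner l
    by (cases l) auto
  then have "\<not> edge u u" for u
    by (cases u) (auto simp: edge_def)
  then show ?thesis
    unfolding simple_graph_def using finite_verts edge_sym edge_in_verts by blast
qed

subsection \<open>Degrees and connectivity\<close>

definition gadget_nbrs :: "nat list \<Rightarrow> label \<Rightarrow> label set" where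
  "gadget_nbrs p l =
    {l'. label_ok p l' \<and> (gadget_arc (length p < h) l l' \<or> gadget_arc (length p < h) l' l)}"

definition child_nbrs :: "nat list \<Rightarrow> label \<Rightarrow> (nat list \<times> label) set" where
  "child_nbrs p l =
    (if length p < h \<and> l = Down0 then (\<lambda>c. (p @ [c], Up0)) ` {..<d - 1}
     else if length p < h \<and> l = Down1 then (\<lambda>c. (p @ [c], Up1)) ` {..<d - 1}
     else {})"

definition parent_nbrs :: "nat list \<Rightarrow> label \<Rightarrow> (nat list \<times> label) set" where
  "parent_nbrs p l =
    (if p \<noteq> [] \<and> l = Up0 then {(butlast p, Down0)}
     else if p \<noteq> [] \<and> l = Up1 then {(butlast p, Down1)}
     else {})"

lemma nbrs_subset_decomp:
  "{w \<in> verts. edge (p, l) w} \<subseteq> Pair p ` gadget_nbrs p l \<union> child_nbrs p l \<union> parent_nbrs p l"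
proof
  fix w
  assume w: "w \<in> {w \<in> verts. edge (p, l) w}"
  obtain q l' where w_def: "w = (q, l')"
    by (cases w)
  have q: "set q \<subseteq> {..<d - 1}" "length q \<le> h" "label_ok q l'"
    using w by (auto simp: w_def edge_def verts_def)
  have "arc (p, l) (q, l') \<or> arc (q, l') (p, l)"
    using w by (auto simp: w_def edge_def)
  then consider
      "q = p" "l' \<in> gadget_nbrs p l"
    | c where "q = p @ [c]" "l = Down0 \<and> l' = Up0 \<or> l = Down1 \<and> l' = Up1"
    | c where "p = q @ [c]" "l' = Down0 \<and> l = Up0 \<or> l' = Down1 \<and> l = Up1"
    unfolding arc.simps gadget_nbrs_def using q(3) by blast
  then show "w \<in> Pair p ` gadget_nbrs p l \<union> child_nbrs p l \<union> parent_nbrs p l"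
  proof cases
    case 1
    then show ?thesis
      by (simp add: w_def)
  next
    case (2 c)
    then have "length p < h" "c < d - 1"
      using q(1,2) by auto
    then show ?thesis
      using 2 by (auto simp: w_def child_nbrs_def)
  next
    case (3 c)
    then show ?thesis
      by (auto simp: w_def parent_nbrs_def)
  qed
qed

lemma decomp_subset_nbrs:
  assumes p: "(p, l) \<in> verts"
  shows "Pair p ` gadget_nbrs p l \<union> child_nbrs p l \<union> parent_nbrs p l \<subseteq> {w \<in> verts. edge (p, l) w}"
proof
  fix w
  assume "w \<in> Pair p ` gadget_nbrs p l \<union> child_nbrs p l \<union> parent_nbrs p l"
  then consider
      l' where "w = (p, l')" "l' \<in> gadget_nbrs p l"
    | c where "length p < h" "c < d - 1" "l = Down0 \<and> w = (p @ [c], Up0) \<or> l = Down1 \<and> w = (p @ [c], Up1)"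
    | "p \<noteq> []" "l = Up0 \<and> w = (butlast p, Down0) \<or> l = Up1 \<and> w = (butlast p, Down1)"
    unfolding child_nbrs_def parent_nbrs_def by (auto split: if_splits)
  then show "w \<in> {w \<in> verts. edge (p, l) w}"
  proof cases
    case (1 l')
    then show ?thesis
      using p by (auto simp: edge_def verts_def gadget_nbrs_def)
  next
    case (2 c)
    then show ?thesis
      using p by (auto simp: edge_def verts_def)
  next
    case 3
    then have "p = butlast p @ [last p]"
      by simp
    then have "arc (butlast p, Down0) (p, Up0)" "arc (butlast p, Down1) (p, Up1)"
      by (simp_all only: arc.simps) blast+
    moreover have "length (butlast p) < h"
      using p 3 by (cases p) (auto simp: verts_def)
    then have "(butlast p, Down0) \<in> verts" "(butlast p, Down1) \<in> verts"
      using p by (auto simp: verts_def dest: in_set_butlastD)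
    ultimately show ?thesis
      using p 3 by (auto simp: edge_def)
  qed
qed

lemma nbrs_decomp:
  "(p, l) \<in> verts \<Longrightarrow>
    {w \<in> verts. edge (p, l) w} = Pair p ` gadget_nbrs p l \<union> child_nbrs p l \<union> parent_nbrs p l"
  using nbrs_subset_decomp decomp_subset_nbrs by (rule equalityI)

lemma card_gadget_nbrs_port:
  assumes "l \<in> {Up0, Up1, Down0, Down1}"
  shows "card (gadget_nbrs p l) = (if l = Down0 \<or> l = Down1 then 1 else if p = [] then d else d - 1)"
proof -
  let ?inner = "length p < h"
  have d: "3 \<le> d"
    by (rule three_le_d)
  have "gadget_nbrs p Up0 = insert Up1 ((if ?inner then {Down0} else {})
      \<union> CoreY ` {(if ?inner then 1 else 0)..<d - 2} \<union> (if p = [] then {RootY 0} else {}))"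
    unfolding gadget_nbrs_def by (rule set_eqI, case_tac x) (use d in auto)
  moreover have "gadget_nbrs p Up1 = insert Up0 (CoreX ` {..<d - 2} \<union> (if p = [] then {RootX 0} else {}))"
    unfolding gadget_nbrs_def by (rule set_eqI, case_tac x) (use d in auto)
  moreover have "gadget_nbrs p Down0 = {Up0}"
    unfolding gadget_nbrs_def by (rule set_eqI, case_tac x) auto
  moreover have "gadget_nbrs p Down1 = {CoreY 0}"
    unfolding gadget_nbrs_def by (rule set_eqI, case_tac x) (use d in auto)
  ultimately show ?thesis
    using assms d by (auto simp: card_image inj_on_def card_insert_if image_iff)
qed

lemma card_gadget_nbrs_core:
  assumes "l \<notin> {Up0, Up1, Down0, Down1}" "label_ok p l"
  shows "card (gadget_nbrs p l) = d"
proof -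
  have d: "3 \<le> d"
    by (rule three_le_d)
  show ?thesis
  proof (cases l)
    case (CoreX i)
    have "gadget_nbrs p l = (if i < d - 2 then insert Up1 (CoreY ` ({..<d} - {i})) else CoreY ` {..<d})"
      unfolding CoreX gadget_nbrs_def by (rule set_eqI, case_tac x) auto
    then show ?thesis
      using assms d CoreX by (auto simp: card_image inj_on_def card_insert_if image_iff)
  next
    case (CoreY j)
    have "gadget_nbrs p l = (if j < d - 2
        then insert (if length p < h \<and> j = 0 then Down1 else Up0) (CoreX ` ({..<d} - {j}))
        else CoreX ` {..<d})"
      unfolding CoreY gadget_nbrs_def by (rule set_eqI, case_tac x) (use d in auto)
    then show ?thesis
      using assms d CoreY by (auto simp: card_image inj_on_def card_insert_if image_iff)
  next
    case (RootX i)
    have "gadget_nbrs p l = (if i = 0 then insert Up1 (RootY ` ({..<d} - {0})) else RootY ` {..<d})"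
      unfolding RootX gadget_nbrs_def by (rule set_eqI, case_tac x) (use assms RootX in auto)
    then show ?thesis
      using assms d RootX by (auto simp: card_image inj_on_def card_insert_if image_iff)
  next
    case (RootY j)
    have "gadget_nbrs p l = (if j = 0 then insert Up0 (RootX ` ({..<d} - {0})) else RootX ` {..<d})"
      unfolding RootY gadget_nbrs_def by (rule set_eqI, case_tac x) (use assms RootY in auto)
    then show ?thesis
      using assms d RootY by (auto simp: card_image inj_on_def card_insert_if image_iff)
  qed (use assms in auto)
qed

lemma degree_verts:
  assumes u: "(p, l) \<in> verts"
  shows "card {w \<in> verts. edge (p, l) w} = d"
proof -
  have ok: "label_ok p l"
    using u by (simp add: verts_def)
  have finite: "finite (gadget_nbrs p l)"
    by (rule finite_subset[of _ labels]) (auto simp: gadget_nbrs_def intro: label_ok_in_labels, simp add: labels_def)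
  have "p \<noteq> [] \<Longrightarrow> butlast p \<noteq> p"
    by (metis append_butlast_last_id append_self_conv list.discI)
  then have "(Pair p ` gadget_nbrs p l \<union> child_nbrs p l) \<inter> parent_nbrs p l = {}"
    by (auto simp: child_nbrs_def parent_nbrs_def)
  moreover have "Pair p ` gadget_nbrs p l \<inter> child_nbrs p l = {}"
    by (auto simp: child_nbrs_def)
  moreover have "finite (child_nbrs p l)" "finite (parent_nbrs p l)"
    by (simp_all add: child_nbrs_def parent_nbrs_def)
  ultimately have "card {w \<in> verts. edge (p, l) w}
      = card (Pair p ` gadget_nbrs p l) + card (child_nbrs p l) + card (parent_nbrs p l)"
    unfolding nbrs_decomp[OF u] using finite by (simp add: card_Un_disjoint)
  also have "\<dots> = card (gadget_nbrs p l)
      + (if length p < h \<and> (l = Down0 \<or> l = Down1) then d - 1 else 0)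
      + (if p \<noteq> [] \<and> (l = Up0 \<or> l = Up1) then 1 else 0)"
    by (auto simp: card_image inj_on_def child_nbrs_def parent_nbrs_def)
  also have "\<dots> = d"
    using card_gadget_nbrs_port[of l p] card_gadget_nbrs_core[OF _ ok] ok three_le_d by (cases l) auto
  finally show ?thesis .
qed

lemma regular_verts: "regular verts edge d"
  unfolding regular_def degree_def using degree_verts by auto

lemma reaches_via_gadget_arc:
  assumes "(p, a) \<in> verts" "(p, b) \<in> verts"
    and "gadget_arc (length p < h) a b \<or> gadget_arc (length p < h) b a" "edge\<^sup>*\<^sup>* (p, b) x"
  shows "edge\<^sup>*\<^sup>* (p, a) x"
proof -
  have "edge (p, a) (p, b)"
    using assms(1-3) by (auto simp: edge_def)
  then show ?thesis
    using assms(4) by (rule converse_rtranclp_into_rtranclp)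
qed

lemma reaches_Up0_core:
  assumes "(p, Up0) \<in> verts"
  shows "edge\<^sup>*\<^sup>* (p, Up1) (p, Up0)"
    and "i < d \<Longrightarrow> edge\<^sup>*\<^sup>* (p, CoreX i) (p, Up0)"
    and "j < d \<Longrightarrow> edge\<^sup>*\<^sup>* (p, CoreY j) (p, Up0)"
proof -
  have d: "3 \<le> d"
    by (rule three_le_d)
  show Up1: "edge\<^sup>*\<^sup>* (p, Up1) (p, Up0)"
    by (rule reaches_via_gadget_arc) (use assms in \<open>auto simp: verts_def\<close>)
  have "edge\<^sup>*\<^sup>* (p, CoreX 0) (p, Up0)"
    by (rule reaches_via_gadget_arc[OF _ _ _ Up1]) (use assms d in \<open>auto simp: verts_def\<close>)
  then have CoreY_last: "edge\<^sup>*\<^sup>* (p, CoreY (d - 1)) (p, Up0)"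
    by (rule reaches_via_gadget_arc[rotated 3]) (use assms d in \<open>auto simp: verts_def\<close>)
  show CoreX: "edge\<^sup>*\<^sup>* (p, CoreX i) (p, Up0)" if "i < d" for i
    by (rule reaches_via_gadget_arc[OF _ _ _ CoreY_last]) (use assms d that in \<open>auto simp: verts_def\<close>)
  show "edge\<^sup>*\<^sup>* (p, CoreY j) (p, Up0)" if "j < d" for j
    by (rule reaches_via_gadget_arc[OF _ _ _ CoreX[of "d - 1"]]) (use assms d that in \<open>auto simp: verts_def\<close>)
qed

lemma reaches_Up0_root:
  assumes "i < d"
  shows "edge\<^sup>*\<^sup>* ([], RootX i) ([], Up0)" and "edge\<^sup>*\<^sup>* ([], RootY i) ([], Up0)"
proof -
  have d: "3 \<le> d"
    by (rule three_le_d)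
  have RootY0: "edge\<^sup>*\<^sup>* ([], RootY 0) ([], Up0)"
    by (rule reaches_via_gadget_arc) (use d in \<open>auto simp: verts_def\<close>)
  have RootX0: "edge\<^sup>*\<^sup>* ([], RootX 0) ([], Up0)"
    by (rule reaches_via_gadget_arc[OF _ _ _ reaches_Up0_core(1)]) (use d in \<open>auto simp: verts_def\<close>)
  show "edge\<^sup>*\<^sup>* ([], RootX i) ([], Up0)"
  proof (cases "i = 0")
    case False
    show ?thesis
      by (rule reaches_via_gadget_arc[OF _ _ _ RootY0]) (use assms False in \<open>auto simp: verts_def\<close>)
  qed (use RootX0 in simp)
  show "edge\<^sup>*\<^sup>* ([], RootY i) ([], Up0)"
  proof (cases "i = 0")
    case False
    show ?thesis
      by (rule reaches_via_gadget_arc[OF _ _ _ RootX0]) (use assms False in \<open>auto simp: verts_def\<close>)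
  qed (use RootY0 in simp)
qed

lemma reaches_Up0:
  assumes u: "(p, l) \<in> verts"
  shows "edge\<^sup>*\<^sup>* (p, l) (p, Up0)"
proof -
  have p: "(p, Up0) \<in> verts"
    using u by (simp add: verts_def)
  show ?thesis
  proof (cases l)
    case Down0
    then show ?thesis
      by (intro reaches_via_gadget_arc[OF u p]) auto
  next
    case Down1
    then show ?thesis
      using three_le_d p by (intro reaches_via_gadget_arc[OF u _ _ reaches_Up0_core(3)[OF p]]) (auto simp: verts_def)
  qed (use u reaches_Up0_core[OF p] reaches_Up0_root in \<open>auto simp: verts_def\<close>)
qed

lemma reaches_root:
  "(p, l) \<in> verts \<Longrightarrow> edge\<^sup>*\<^sup>* (p, l) ([], Up0)"
proof (induction p arbitrary: l rule: rev_induct)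
  case Nil
  then show ?case
    by (rule reaches_Up0)
next
  case (snoc c q)
  then have "set q \<subseteq> {..<d - 1}" "length q < h"
    by (auto simp: verts_def)
  then have "edge (q @ [c], Up0) (q, Down0)" "(q, Down0) \<in> verts" "(q, Up0) \<in> verts"
    using snoc.prems by (auto simp: edge_def verts_def)
  then show ?case
    using reaches_Up0[OF snoc.prems] reaches_Up0[of q Down0] snoc.IH[of Up0]
    by (meson converse_rtranclp_into_rtranclp rtranclp_trans)
qed

lemma dist_verts_finite:
  assumes "u \<in> verts" "v \<in> verts"
  shows "dist verts edge u v \<noteq> \<infinity>"
proof -
  have "edge\<^sup>*\<^sup>* u ([], Up0)" "edge\<^sup>*\<^sup>* v ([], Up0)"
    using assms reaches_root by (metis prod.collapse)+
  moreover have "edge\<inverse>\<inverse> = edge"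
    using edge_sym by (auto intro!: ext)
  ultimately have "edge\<^sup>*\<^sup>* u v"
    by (metis rtranclp_converseI rtranclp_trans)
  then show ?thesis
    using dist_finite_if_rtranclp assms(1) edge_in_verts by metis
qed

subsection \<open>Subtrees and the Mostar index\<close>

definition subtree :: "nat list \<Rightarrow> (nat list \<times> label) set" where
  "subtree p = {w \<in> verts. prefix p (fst w)}"

lemma subtree_Nil: "subtree [] = verts"
  by (auto simp: subtree_def)

lemma subtree_snoc_subset: "subtree (q @ [c]) \<subseteq> subtree q"
  by (auto simp: subtree_def dest: append_prefixD)

lemma subtree_boundary:
  assumes "edge x y" "x \<in> subtree p" "y \<notin> subtree p"
  shows "x = (p, Up0) \<or> x = (p, Up1)"
  using assms by (cases x; cases y) (auto simp: edge_def subtree_def)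

lemma edge_within_subtree:
  assumes "edge u v"
  obtains p where "p = fst u \<or> p = fst v" "(p, Up0) \<in> verts" "u \<in> subtree p" "v \<in> subtree p"
proof -
  have "prefix (fst u) (fst v) \<or> prefix (fst v) (fst u)"
    using assms by (cases u; cases v) (auto simp: edge_def)
  moreover have "(fst u, Up0) \<in> verts" "(fst v, Up0) \<in> verts"
    using edge_in_verts[OF assms] by (auto simp: verts_def)
  ultimately show ?thesis
    using that edge_in_verts[OF assms] by (auto simp: subtree_def)
qed

lemma port_distances:
  assumes p: "(q @ [c], Up0) \<in> verts"
  shows "dist verts edge (q, Up0) (q @ [c], Up0) \<le> 2"
    and "dist verts edge (q, Up1) (q @ [c], Up0) \<le> 3"
    and "3 \<le> dist verts edge (q, Up0) (q @ [c], Up1)"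
    and "4 \<le> dist verts edge (q, Up1) (q @ [c], Up1)"
proof -
  let ?p = "q @ [c]"
  have q: "set q \<subseteq> {..<d - 1}" "length q < h"
    using p by (auto simp: verts_def)
  then have V: "(?p, Up1) \<in> verts" "(q, Up0) \<in> verts" "(q, Up1) \<in> verts" "(q, Down0) \<in> verts"
    using p by (auto simp: verts_def)
  have E: "edge (q, Up1) (q, Up0)" "edge (q, Up0) (q, Down0)" "edge (q, Down0) (?p, Up0)"
    using V p by (auto simp: edge_def)
  have colour: "\<And>x y. edge x y \<Longrightarrow> (side \<circ> snd) x \<noteq> (side \<circ> snd) y"
    using edge_side by simp
  have "walk verts edge [(q, Up0), (q, Down0), (?p, Up0)]"
    using E V p by simp
  then have "dist verts edge (q, Up0) (?p, Up0) \<le> enat (length [(q, Up0), (q, Down0), (?p, Up0)] - 1)"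
    by (rule dist_le_walk_length) simp_all
  then show "dist verts edge (q, Up0) (?p, Up0) \<le> 2"
    by (simp add: numeral_eq_enat numeral_2_eq_2)
  have "walk verts edge [(q, Up1), (q, Up0), (q, Down0), (?p, Up0)]"
    using E V p by simp
  then have "dist verts edge (q, Up1) (?p, Up0)
      \<le> enat (length [(q, Up1), (q, Up0), (q, Down0), (?p, Up0)] - 1)"
    by (rule dist_le_walk_length) simp_all
  then show "dist verts edge (q, Up1) (?p, Up0) \<le> 3"
    by (simp add: numeral_eq_enat numeral_3_eq_3)
  show "3 \<le> dist verts edge (q, Up0) (?p, Up1)"
    by (intro dist_ge_3_if_odd[where col = "side \<circ> snd", OF colour]) (simp_all add: dist_verts_finite V edge_def)
  have "{w \<in> verts. edge (q, Up1) w} \<inter> {w \<in> verts. edge (?p, Up1) w} = {}"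
  proof -
    have "Down1 \<notin> gadget_nbrs r Up1" for r
      by (simp add: gadget_nbrs_def)
    moreover have "q \<noteq> [] \<Longrightarrow> butlast q \<noteq> q" "butlast q \<noteq> ?p"
      by (metis append_butlast_last_id append_self_conv list.discI)
        (metis length_append_singleton length_butlast lessI less_imp_diff_less nat_neq_iff)
    ultimately show ?thesis
      unfolding nbrs_decomp[OF V(3)] nbrs_decomp[OF V(1)]
      by (auto simp: child_nbrs_def parent_nbrs_def)
  qed
  then have "\<not> (edge (q, Up1) w \<and> edge w (?p, Up1))" for w
    using edge_sym edge_in_verts by blast
  then show "4 \<le> dist verts edge (q, Up1) (?p, Up1)"
    by (intro dist_ge_4_if_even[where col = "side \<circ> snd", OF colour]) (simp_all add: dist_verts_finite V)
qed

lemma abs_n_closer_diff_ge_in_subtree: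
  assumes e: "edge u v" and p: "(q @ [c], Up0) \<in> verts"
    and uv: "u \<in> subtree (q @ [c])" "v \<in> subtree (q @ [c])"
  shows "real (card verts) - 2 * real (card (subtree q))
    \<le> \<bar>real (n_closer verts edge u v) - real (n_closer verts edge v u)\<bar>"
proof -
  let ?p = "q @ [c]"
  have V: "(?p, Up1) \<in> verts" "(q, Up0) \<in> verts" "(q, Up1) \<in> verts" "u \<in> verts" "v \<in> verts"
    using p edge_in_verts[OF e] by (auto simp: verts_def)
  have "(?p, Up1) \<in> subtree ?p" "edge (?p, Up0) (?p, Up1)"
    using p V by (auto simp: subtree_def edge_def)
  then have via: "dist verts edge w z = dist verts edge w (?p, Up0) + dist verts edge (?p, Up0) z"
    if "w \<in> verts - subtree q" "z \<in> {u, v}" for w z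
    using that uv subtree_snoc_subset p V port_distances[OF p]
    by (intro dist_via_near_port[where Q = "subtree q" and R = "subtree ?p"])
      (auto simp: edge_sym dist_verts_finite subtree_boundary subtree_def)
  show ?thesis
    using V p e via edge_side
    by (intro abs_n_closer_diff_ge_if_bipartite[where col = "side \<circ> snd" and a = "(?p, Up0)"])
      (auto simp: finite_verts subtree_def dist_verts_finite)
qed

lemma abs_n_closer_diff_ge_edge:
  assumes "edge u v"
  shows "real (card verts)
      - (2 * real (card (subtree (butlast (fst u)))) + 2 * real (card (subtree (butlast (fst v)))))
    \<le> \<bar>real (n_closer verts edge u v) - real (n_closer verts edge v u)\<bar>"
proof -
  obtain p where p: "p = fst u \<or> p = fst v" "(p, Up0) \<in> verts" "u \<in> subtree p" "v \<in> subtree p"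
    using edge_within_subtree[OF assms] .
  have "real (card verts) - 2 * real (card (subtree (butlast p)))
      \<le> \<bar>real (n_closer verts edge u v) - real (n_closer verts edge v u)\<bar>"
  proof (cases "p = []")
    case True
    then show ?thesis
      by (simp add: subtree_Nil)
  next
    case False
    then have "p = butlast p @ [last p]"
      by simp
    then show ?thesis
      using abs_n_closer_diff_ge_in_subtree[OF assms, of "butlast p" "last p"] p by simp
  qed
  then show ?thesis
    using p(1) by auto
qed

lemma card_ancestor_subtrees_le:
  assumes "w \<in> verts"
  shows "card {u \<in> verts. w \<in> subtree (butlast (fst u))} \<le> (1 + (h + 1) * (d - 1)) * (4 + 4 * d)"
proof -
  let ?words = "insert [] ((\<lambda>(r, c). r @ [c]) ` (set (prefixes (fst w)) \<times> {..<d - 1}))"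
  have "{u \<in> verts. w \<in> subtree (butlast (fst u))} \<subseteq> ?words \<times> labels"
  proof
    fix u
    assume u: "u \<in> {u \<in> verts. w \<in> subtree (butlast (fst u))}"
    obtain \<sigma> l where [simp]: "u = (\<sigma>, l)"
      by (cases u)
    have "set \<sigma> \<subseteq> {..<d - 1}"
      using u by (simp add: verts_def)
    then have "\<sigma> = butlast \<sigma> @ [last \<sigma>]" "last \<sigma> < d - 1" if "\<sigma> \<noteq> []"
      using that last_in_set[OF that] by (simp, blast)
    moreover have "prefix (butlast \<sigma>) (fst w)"
      using u by (simp add: subtree_def)
    ultimately have "\<sigma> \<in> ?words"
      by (cases "\<sigma> = []") (auto intro!: image_eqI[of _ _ "(butlast \<sigma>, last \<sigma>)"])
    then show "u \<in> ?words \<times> labels"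
      using u label_ok_in_labels by (auto simp: verts_def)
  qed
  moreover have "finite (?words \<times> labels)"
    by (simp add: labels_def)
  ultimately have "card {u \<in> verts. w \<in> subtree (butlast (fst u))} \<le> card (?words \<times> labels)"
    by (rule card_mono[rotated])
  also have "\<dots> = card ?words * card labels"
    by (rule card_cartesian_product)
  also have "\<dots> \<le> (1 + (h + 1) * (d - 1)) * (4 + 4 * d)"
  proof (rule mult_le_mono[OF _ card_labels_le])
    have "card ?words
        \<le> card {[] :: nat list} + card ((\<lambda>(r, c). r @ [c]) ` (set (prefixes (fst w)) \<times> {..<d - 1}))"
      using card_Un_le[of "{[] :: nat list}" "(\<lambda>(r, c). r @ [c]) ` (set (prefixes (fst w)) \<times> {..<d - 1})"]
      by simp
    also have "\<dots> \<le> 1 + card (set (prefixes (fst w)) \<times> {..<d - 1})"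
      by (rule add_mono[OF _ card_image_le]) simp_all
    also have "\<dots> \<le> 1 + (h + 1) * (d - 1)"
      using assms by (auto simp: verts_def card_cartesian_product)
    finally show "card ?words \<le> 1 + (h + 1) * (d - 1)" .
  qed
  finally show ?thesis .
qed

lemma sum_ancestor_subtrees_le:
  "(\<Sum>u\<in>verts. real (card (subtree (butlast (fst u)))))
    \<le> real (card verts) * real ((1 + (h + 1) * (d - 1)) * (4 + 4 * d))"
proof -
  let ?M = "(1 + (h + 1) * (d - 1)) * (4 + 4 * d)"
  have "(\<Sum>u\<in>verts. card (subtree (butlast (fst u))))
      = (\<Sum>u\<in>verts. \<Sum>w\<in>verts. if w \<in> subtree (butlast (fst u)) then 1 else 0)"
    by (intro sum.cong refl) (simp add: subtree_def finite_verts sum.If_cases Int_def)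
  also have "\<dots> = (\<Sum>w\<in>verts. card {u \<in> verts. w \<in> subtree (butlast (fst u))})"
    by (subst sum.swap) (simp add: finite_verts sum.If_cases Int_def conj_commute)
  also have "\<dots> \<le> (\<Sum>w\<in>verts. ?M)"
    by (intro sum_mono card_ancestor_subtrees_le)
  finally have "(\<Sum>u\<in>verts. card (subtree (butlast (fst u)))) \<le> card verts * ?M"
    by simp
  then show ?thesis
    by (metis of_nat_le_iff of_nat_mult of_nat_sum)
qed

lemma mostar_verts_ge:
  "real d * real (card verts)^2 / 2
      - 2 * real d * real (card verts) * real ((1 + (h + 1) * (d - 1)) * (4 + 4 * d)) - 1/2
    \<le> real (mostar verts edge)"
proof -
  let ?\<kappa> = "\<lambda>u. 2 * real (card (subtree (butlast (fst u))))"
  have "real d * real (card verts)^2 / 2 - real d * (\<Sum>u\<in>verts. ?\<kappa> u) - 1/2 \<le> real (mostar verts edge)"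
    using simple_graph_verts regular_verts abs_n_closer_diff_ge_edge by (rule mostar_ge_if_edge_bound)
  moreover have "real d * (\<Sum>u\<in>verts. ?\<kappa> u)
      \<le> 2 * real d * real (card verts) * real ((1 + (h + 1) * (d - 1)) * (4 + 4 * d))"
    using sum_ancestor_subtrees_le mult_left_mono[OF _ of_nat_0_le_iff[of d]]
    by (simp add: sum_distrib_left[symmetric] mult.assoc)
  ultimately show ?thesis
    by linarith
qed

lemma card_verts_ge: "(d - 1) ^ h \<le> card verts"
proof -
  have "(\<lambda>p. (p, Up0)) ` {p. set p \<subseteq> {..<d - 1} \<and> length p = h} \<subseteq> verts"
    by (rule image_subsetI) (simp add: verts_def)
  then have "card ((\<lambda>p. (p, Up0)) ` {p. set p \<subseteq> {..<d - 1} \<and> length p = h}) \<le> card verts"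
    by (rule card_mono[OF finite_verts])
  then show ?thesis
    by (simp add: card_image inj_on_def card_lists_length_eq)
qed

end

lemma cubic_coefficient_nonneg:
  fixes d :: real
  assumes "3 \<le> d"
  shows "0 \<le> 20 * d^3 + 12 * d^2 - 24 * d + 48"
proof -
  have "24 * d \<le> 20 * d^3"
    using assms mult_right_mono[of 9 "d * d" d] mult_mono[of 3 d 3 d]
    by (simp add: power3_eq_cube)
  then show ?thesis
    using zero_le_power2[of d] by linarith
qed

lemma ancestor_count_le_cubic:
  fixes d h :: real
  assumes "3 \<le> d" "1 \<le> h"
  shows "2 * d * ((1 + (h + 1) * (d - 1)) * (4 + 4 * d)) \<le> (20 * d^3 + 12 * d^2 - 24 * d + 48 - 1) * h"
proof -
  have "1 + (h + 1) * (d - 1) \<le> h * (2 * d - 1)"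
    using assms mult_right_mono[of 1 h d] by (simp add: algebra_simps)
  then have "2 * d * ((1 + (h + 1) * (d - 1)) * (4 + 4 * d)) \<le> 2 * d * ((h * (2 * d - 1)) * (4 + 4 * d))"
    using assms by (intro mult_left_mono mult_right_mono) auto
  also have "\<dots> = (16 * d^3 + 8 * d^2 - 8 * d) * h"
    by (simp add: algebra_simps power2_eq_square power3_eq_cube)
  also have "\<dots> \<le> (20 * d^3 + 12 * d^2 - 24 * d + 48 - 1) * h"
  proof (rule mult_right_mono)
    have "16 * d \<le> 4 * d^3"
      using assms mult_right_mono[of 9 "d * d" d] mult_mono[of 3 d 3 d]
      by (simp add: power3_eq_cube)
    then show "16 * d^3 + 8 * d^2 - 8 * d \<le> 20 * d^3 + 12 * d^2 - 24 * d + 48 - 1"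
      using zero_le_power2[of d] by linarith
  qed (use assms in simp)
  finally show ?thesis .
qed

context gadget_tree
begin

lemma mostar_verts_ge_log:
  assumes "1 \<le> h"
  shows "real d / 2 * (real (card verts))^2
      - (20 * real d^3 + 12 * real d^2 - 24 * real d + 48) * real (card verts) * log (real d - 1) (real (card verts))
    \<le> real (mostar verts edge)"
proof -
  let ?n = "real (card verts)" and ?C = "20 * real d^3 + 12 * real d^2 - 24 * real d + 48"
  have d: "3 \<le> real d"
    using three_le_d by simp
  have "real ((d - 1) ^ h) \<le> ?n"
    using card_verts_ge by linarith
  then have n: "(real d - 1) ^ h \<le> ?n"
    using three_le_d by (simp add: of_nat_diff)
  then have "1 \<le> ?n"
    using one_le_power[of "real d - 1" h] d by linarith
  have "real h \<le> log (real d - 1) ?n"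
    using n d \<open>1 \<le> ?n\<close> by (simp add: le_log_iff powr_realpow)
  then have "?C * ?n * real h \<le> ?C * ?n * log (real d - 1) ?n"
    using d \<open>1 \<le> ?n\<close> cubic_coefficient_nonneg by (intro mult_left_mono) auto
  moreover have "2 * real d * ?n * real ((1 + (h + 1) * (d - 1)) * (4 + 4 * d)) + 1/2 \<le> ?C * ?n * real h"
  proof -
    have "real (d - 1) = real d - 1"
      using three_le_d by (simp add: of_nat_diff)
    then have "real ((1 + (h + 1) * (d - 1)) * (4 + 4 * d)) = (1 + (real h + 1) * (real d - 1)) * (4 + 4 * real d)"
      by (simp only: of_nat_mult of_nat_add of_nat_1 of_nat_numeral)
    then have "2 * real d * real ((1 + (h + 1) * (d - 1)) * (4 + 4 * d)) \<le> (?C - 1) * real h"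
      using ancestor_count_le_cubic[of "real d" "real h"] d assms by (simp only:)
    then have "?n * (2 * real d * real ((1 + (h + 1) * (d - 1)) * (4 + 4 * d))) \<le> ?n * ((?C - 1) * real h)"
      using \<open>1 \<le> ?n\<close> by (intro mult_left_mono) auto
    moreover have "1 \<le> ?n * real h"
      using \<open>1 \<le> ?n\<close> assms by (metis mult_mono' mult_1 of_nat_le_iff of_nat_1 zero_le_one)
    ultimately show ?thesis
      by (simp add: algebra_simps)
  qed
  ultimately show ?thesis
    using mostar_verts_ge by (simp add: algebra_simps)
qed

end

theorem theorem1:
  fixes n0 \<Delta> :: nat
  assumes "n0 \<ge> 3" and "\<Delta> \<ge> 3"
  shows "\<exists>(V :: nat set) E. simple_graph V E \<and> regular V E \<Delta> \<and> card V \<ge> n0 \<and>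
    real (mostar V E) \<ge> real \<Delta> / 2 * (real (card V))^2
      - (20 * real \<Delta>^3 + 12 * real \<Delta>^2 - 24 * real \<Delta> + 48)
        * real (card V) * log (real \<Delta> - 1) (real (card V))"
proof -
  interpret T: gadget_tree \<Delta> n0
    using assms(2) by unfold_locales
  let ?f = "to_nat :: nat list \<times> label \<Rightarrow> nat"
  have "n0 \<le> 2 ^ n0"
    by (simp add: less_imp_le)
  also have "\<dots> \<le> (\<Delta> - 1) ^ n0"
    using assms(2) by (simp add: power_mono)
  also have "\<dots> \<le> card T.verts"
    by (rule T.card_verts_ge)
  finally have "n0 \<le> card T.verts" .
  moreover have "1 \<le> n0"
    using assms(1) by simp
  ultimately show ?thesis
    using T.mostar_verts_ge_log T.simple_graph_verts T.regular_verts
    by (intro exI[of _ "?f ` T.verts"] exI[of _ "image_edges ?f T.edge"])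
      (simp add: simple_graph_image regular_image card_image_vertices mostar_image)
qed

end
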